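(* Let $0<\alpha<1$ and $0<\gamma<1$, and for integers $t\ge1$ define $$S(t)\triangleq\sum_{i=1}^{t-1}\frac{(1-\gamma)\,\alpha^{t-i}}{1-\gamma^{i+1}}$$ (so $S(1)=0$). Let $t_0=\left\lceil \ln\!\left(\frac{1-\alpha}{1+\alpha-2\gamma\alpha}\right)\Big/\ln(\gamma)\right\rceil$ and $A_\gamma=\max\left\{\frac{(1-\gamma^{t_0})S(t_0)}{1-\gamma},\ \frac{2\alpha}{1-\alpha}\right\}$. Then for all integers $t\ge t_0$, $$S(t)\le\frac{A_\gamma(1-\gamma)}{1-\gamma^t}.$$ Furthermore, $$\lim_{t\to\infty}S(t)=\frac{(1-\gamma)\alpha}{1-\alpha}.$$
   Context: In the paper, $\alpha=(1-\eta\mu)^E$ is the contraction factor of $E$ gradient-descent steps with step size $\eta\in(0,\frac{2}{\mu+L}]$ on a $\mu$-strongly convex, $L$-smooth function, and $\gamma$ is a discount factor. *)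

theory Defs
  imports "HOL-Analysis.Analysis"
begin

definition S_seq :: "real \<Rightarrow> real \<Rightarrow> nat \<Rightarrow> real" where
  "S_seq \<alpha> \<gamma> t = (\<Sum>i=1..<t. (1 - \<gamma>) * \<alpha> ^ (t - i) / (1 - \<gamma> ^ (i + 1)))"

definition t0_of :: "real \<Rightarrow> real \<Rightarrow> nat" where
  "t0_of \<alpha> \<gamma> = nat \<lceil>ln ((1 - \<alpha>) / (1 + \<alpha> - 2 * \<gamma> * \<alpha>)) / ln \<gamma>\<rceil>"

definition A_gamma :: "real \<Rightarrow> real \<Rightarrow> real" where
  "A_gamma \<alpha> \<gamma> = max ((1 - \<gamma> ^ t0_of \<alpha> \<gamma>) * S_seq \<alpha> \<gamma> (t0_of \<alpha> \<gamma>) / (1 - \<gamma>))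
                        (2 * \<alpha> / (1 - \<alpha>))"

end

theory Submission
  imports Defs
begin

text \<open>
  For \<open>t \<ge> 1\<close> the sum satisfies the linear recursion
  \<open>S(t+1) = \<alpha> S(t) + (1-\<gamma>)\<alpha>/(1-\<gamma>\<^bsup>t+1\<^esup>)\<close>. Since \<open>\<alpha> < 1\<close> and the forcing term tends
  to \<open>(1-\<gamma>)\<alpha>\<close>, the limit is its fixed point \<open>(1-\<gamma>)\<alpha>/(1-\<alpha>)\<close>. For the bound, the
  choice of \<open>t\<^sub>0\<close> guarantees \<open>\<gamma>\<^sup>t (1+\<alpha>-2\<gamma>\<alpha>) \<le> 1-\<alpha>\<close> for all \<open>t \<ge> t\<^sub>0\<close>, and together
  with \<open>A \<ge> 2\<alpha>/(1-\<alpha>)\<close> this makes the bound \<open>A(1-\<gamma>)/(1-\<gamma>\<^sup>t)\<close> invariant under the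
  recursion; the other term in the maximum defining \<open>A\<close> is exactly the base case \<open>t = t\<^sub>0\<close>.
\<close>

lemma S_seq_Suc:
  assumes "1 \<le> t"
  shows "S_seq \<alpha> \<gamma> (Suc t) = \<alpha> * S_seq \<alpha> \<gamma> t + (1 - \<gamma>) * \<alpha> / (1 - \<gamma> ^ (t + 1))"
proof -
  have "S_seq \<alpha> \<gamma> (Suc t) = (\<Sum>i=1..<t. \<alpha> * ((1 - \<gamma>) * \<alpha> ^ (t - i) / (1 - \<gamma> ^ (i + 1))))
      + (1 - \<gamma>) * \<alpha> / (1 - \<gamma> ^ (t + 1))"
    unfolding S_seq_def using assms
    by (simp add: sum.atLeastLessThan_Suc Suc_diff_le mult.left_commute)
  then show ?thesis
    unfolding S_seq_def by (simp add: sum_distrib_left)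
qed

lemma tendsto_zero_of_perturbed_contraction:
  fixes d :: "nat \<Rightarrow> 'a::real_normed_vector" and e :: "nat \<Rightarrow> real"
  assumes "0 \<le> a" "a < 1"
    and contraction: "\<And>n. norm (d (Suc n)) \<le> a * norm (d n) + e n"
    and "e \<longlonglongrightarrow> 0"
  shows "d \<longlonglongrightarrow> 0"
proof (rule LIMSEQ_I)
  fix r :: real
  assume "0 < r"
  then obtain N where N: "\<And>n. N \<le> n \<Longrightarrow> norm (e n) < r * (1 - a) / 2"
    using LIMSEQ_D[OF \<open>e \<longlonglongrightarrow> 0\<close>, of "r * (1 - a) / 2"] \<open>a < 1\<close> by auto
  have tail: "norm (d (N + k)) \<le> a ^ k * norm (d N) + r / 2" for k
  proof (induction k)
    case 0
    then show ?case using \<open>0 < r\<close> by simp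
  next
    case (Suc k)
    have "norm (d (N + Suc k)) \<le> a * norm (d (N + k)) + e (N + k)"
      using contraction[of "N + k"] by simp
    also have "\<dots> \<le> a * (a ^ k * norm (d N) + r / 2) + r * (1 - a) / 2"
      using Suc.IH N[of "N + k"] \<open>0 \<le> a\<close> by (intro add_mono mult_left_mono) auto
    also have "\<dots> = a ^ Suc k * norm (d N) + r / 2"
      by (simp add: field_simps)
    finally show ?case .
  qed
  have "(\<lambda>k. a ^ k * norm (d N)) \<longlonglongrightarrow> 0"
    using LIMSEQ_power_zero[of a] assms(1,2) by (auto intro: tendsto_mult_left_zero)
  then obtain M where M: "\<And>k. M \<le> k \<Longrightarrow> a ^ k * norm (d N) < r / 2"
    using LIMSEQ_D[of _ 0 "r / 2"] \<open>0 < r\<close> by fastforce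
  have "norm (d n) < r" if "N + M \<le> n" for n
  proof -
    have "M \<le> n - N" "N + (n - N) = n"
      using that by simp_all
    then show ?thesis
      using tail[of "n - N"] M[of "n - N"] by simp
  qed
  then show "\<exists>n0. \<forall>n\<ge>n0. norm (d n - 0) < r"
    by auto
qed

lemma linear_recurrence_tendsto:
  fixes x b :: "nat \<Rightarrow> real"
  assumes "0 \<le> a" "a < 1"
    and recurrence: "\<And>n. x (Suc n) = a * x n + b n"
    and "b \<longlonglongrightarrow> l"
  shows "x \<longlonglongrightarrow> l / (1 - a)"
proof -
  define d where "d n = x n - l / (1 - a)" for n
  have "d (Suc n) = a * d n + (b n - l)" for n
    using \<open>a < 1\<close> unfolding d_def recurrence by (simp add: field_simps)
  then have "norm (d (Suc n)) \<le> a * norm (d n) + norm (b n - l)" for n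
    using abs_triangle_ineq[of "a * d n" "b n - l"] \<open>0 \<le> a\<close> by (simp add: abs_mult)
  moreover have "(\<lambda>n. norm (b n - l)) \<longlonglongrightarrow> 0"
    using tendsto_norm_zero[OF LIM_zero[OF \<open>b \<longlonglongrightarrow> l\<close>]] by simp
  ultimately have "d \<longlonglongrightarrow> 0"
    by (rule tendsto_zero_of_perturbed_contraction[OF assms(1,2)])
  then show ?thesis
    unfolding d_def by (simp add: LIM_zero_iff)
qed

lemma S_seq_tendsto:
  assumes "0 < \<alpha>" "\<alpha> < 1" "0 < \<gamma>" "\<gamma> < 1"
  shows "S_seq \<alpha> \<gamma> \<longlonglongrightarrow> (1 - \<gamma>) * \<alpha> / (1 - \<alpha>)"
proof -
  have "(\<lambda>n. \<gamma> ^ (n + 2)) \<longlonglongrightarrow> 0"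
    using LIMSEQ_ignore_initial_segment[OF LIMSEQ_power_zero, of \<gamma> 2] assms by simp
  then have "(\<lambda>n. (1 - \<gamma>) * \<alpha> / (1 - \<gamma> ^ (n + 2))) \<longlonglongrightarrow> (1 - \<gamma>) * \<alpha> / (1 - 0)"
    by (intro tendsto_intros) auto
  then have "(\<lambda>n. S_seq \<alpha> \<gamma> (Suc n)) \<longlonglongrightarrow> (1 - \<gamma>) * \<alpha> / (1 - \<alpha>)"
    using assms by (intro linear_recurrence_tendsto) (auto simp: S_seq_Suc)
  then show ?thesis
    by (rule LIMSEQ_imp_Suc)
qed

lemma power_le_if_ge_ceiling_log:
  fixes \<gamma> c :: real
  assumes "0 < \<gamma>" "\<gamma> < 1" "0 < c" "nat \<lceil>ln c / ln \<gamma>\<rceil> \<le> t"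
  shows "\<gamma> ^ t \<le> c"
proof -
  have "ln c / ln \<gamma> \<le> real t"
    using real_nat_ceiling_ge[of "ln c / ln \<gamma>"] assms(4) by linarith
  then have "real t * ln \<gamma> \<le> ln c"
    using assms(1,2) by (simp add: neg_divide_le_eq)
  then have "ln (\<gamma> ^ t) \<le> ln c"
    using assms(1) by (simp add: ln_realpow)
  then show ?thesis
    using assms(1,3) by simp
qed

lemma bound_preserved_by_recursion_step:
  fixes \<alpha> \<gamma> g A :: real
  assumes "0 < \<alpha>" "\<alpha> < 1" "0 \<le> \<gamma>" "\<gamma> \<le> 1" "0 \<le> g" "g < 1"
    and small: "g * (1 + \<alpha> - 2 * \<gamma> * \<alpha>) \<le> 1 - \<alpha>"
    and large: "2 * \<alpha> / (1 - \<alpha>) \<le> A"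
  shows "\<alpha> * (A * (1 - \<gamma>) / (1 - g)) + (1 - \<gamma>) * \<alpha> / (1 - \<gamma> * g) \<le> A * (1 - \<gamma>) / (1 - \<gamma> * g)"
proof -
  define p q where "p = 1 - g" and "q = 1 - \<gamma> * g"
  have "0 < p" "0 < q"
    using assms(3-6) mult_left_le_one_le[of g \<gamma>] unfolding p_def q_def by auto
  have "(1 - \<alpha>) * p \<le> 2 * (p - \<alpha> * q)"
    using small unfolding p_def q_def by (simp add: algebra_simps)
  have "0 \<le> A"
    using large divide_nonneg_pos[of "2 * \<alpha>" "1 - \<alpha>"] assms(1,2) by linarith
  have "2 * \<alpha> \<le> A * (1 - \<alpha>)"
    using large assms(2) by (simp add: pos_divide_le_eq)
  then have "2 * \<alpha> * p \<le> A * ((1 - \<alpha>) * p)"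
    using \<open>0 < p\<close> by (simp add: mult_right_mono mult.assoc)
  also have "\<dots> \<le> A * (2 * (p - \<alpha> * q))"
    using \<open>(1 - \<alpha>) * p \<le> _\<close> \<open>0 \<le> A\<close> by (rule mult_left_mono)
  finally have "\<alpha> * A * q + \<alpha> * p \<le> A * p"
    by (simp add: algebra_simps)
  then have "(1 - \<gamma>) * ((\<alpha> * A * q + \<alpha> * p) / (p * q)) \<le> (1 - \<gamma>) * (A * p / (p * q))"
    using \<open>0 < p\<close> \<open>0 < q\<close> assms(4) by (intro mult_left_mono divide_right_mono) auto
  then show ?thesis
    using \<open>0 < p\<close> \<open>0 < q\<close> unfolding p_def [symmetric] q_def [symmetric]
    by (simp add: field_simps)
qed

lemma S_seq_le_bound_from:
  assumes "0 < \<alpha>" "\<alpha> < 1" "0 < \<gamma>" "\<gamma> < 1" "1 \<le> t\<^sub>0"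
    and small: "\<And>t. t\<^sub>0 \<le> t \<Longrightarrow> \<gamma> ^ t * (1 + \<alpha> - 2 * \<gamma> * \<alpha>) \<le> 1 - \<alpha>"
    and large: "2 * \<alpha> / (1 - \<alpha>) \<le> A"
    and init: "S_seq \<alpha> \<gamma> t\<^sub>0 \<le> A * (1 - \<gamma>) / (1 - \<gamma> ^ t\<^sub>0)"
    and "t\<^sub>0 \<le> t"
  shows "S_seq \<alpha> \<gamma> t \<le> A * (1 - \<gamma>) / (1 - \<gamma> ^ t)"
  using \<open>t\<^sub>0 \<le> t\<close>
proof (induction t rule: dec_induct)
  case base
  show ?case
    using init .
next
  case (step t)
  have "\<gamma> ^ t < 1"
    using step.hyps \<open>1 \<le> t\<^sub>0\<close> assms(3,4) by (simp add: power_less_one_iff)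
  have "S_seq \<alpha> \<gamma> (Suc t) = \<alpha> * S_seq \<alpha> \<gamma> t + (1 - \<gamma>) * \<alpha> / (1 - \<gamma> * \<gamma> ^ t)"
    using S_seq_Suc[of t] step.hyps \<open>1 \<le> t\<^sub>0\<close> by simp
  also have "\<dots> \<le> \<alpha> * (A * (1 - \<gamma>) / (1 - \<gamma> ^ t)) + (1 - \<gamma>) * \<alpha> / (1 - \<gamma> * \<gamma> ^ t)"
    using mult_left_mono[OF step.IH, of \<alpha>] assms(1) by simp
  also have "\<dots> \<le> A * (1 - \<gamma>) / (1 - \<gamma> * \<gamma> ^ t)"
    using assms(1-4) small[OF step.hyps(1)] large \<open>\<gamma> ^ t < 1\<close>
    by (intro bound_preserved_by_recursion_step) auto
  finally show ?case
    by simp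
qed

lemma t0_of_ratio_bounds:
  fixes \<alpha> \<gamma> :: real
  assumes "0 < \<alpha>" "\<alpha> < 1" "0 < \<gamma>" "\<gamma> < 1"
  shows "0 < (1 - \<alpha>) / (1 + \<alpha> - 2 * \<gamma> * \<alpha>)" "(1 - \<alpha>) / (1 + \<alpha> - 2 * \<gamma> * \<alpha>) < 1"
proof -
  have "1 - \<alpha> < 1 + \<alpha> - 2 * \<gamma> * \<alpha>"
    using assms by (simp add: mult_less_cancel_right1)
  then show "0 < (1 - \<alpha>) / (1 + \<alpha> - 2 * \<gamma> * \<alpha>)" "(1 - \<alpha>) / (1 + \<alpha> - 2 * \<gamma> * \<alpha>) < 1"
    using assms(2) by simp_all
qed

lemma t0_of_ge_1:
  assumes "0 < \<alpha>" "\<alpha> < 1" "0 < \<gamma>" "\<gamma> < 1"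
  shows "1 \<le> t0_of \<alpha> \<gamma>"
proof -
  have "0 < ln ((1 - \<alpha>) / (1 + \<alpha> - 2 * \<gamma> * \<alpha>)) / ln \<gamma>"
    using t0_of_ratio_bounds[OF assms] assms(3,4) by (simp add: divide_neg_neg)
  then show ?thesis
    unfolding t0_of_def by linarith
qed

lemma power_mul_le_beyond_t0_of:
  assumes "0 < \<alpha>" "\<alpha> < 1" "0 < \<gamma>" "\<gamma> < 1" "t0_of \<alpha> \<gamma> \<le> t"
  shows "\<gamma> ^ t * (1 + \<alpha> - 2 * \<gamma> * \<alpha>) \<le> 1 - \<alpha>"
proof -
  have "0 < 1 + \<alpha> - 2 * \<gamma> * \<alpha>"
    using t0_of_ratio_bounds[OF assms(1-4)] assms(2) by (simp add: zero_less_divide_iff)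
  moreover have "\<gamma> ^ t \<le> (1 - \<alpha>) / (1 + \<alpha> - 2 * \<gamma> * \<alpha>)"
    using power_le_if_ge_ceiling_log[OF assms(3,4) t0_of_ratio_bounds(1)[OF assms(1-4)]] assms(5)
    unfolding t0_of_def by simp
  ultimately show ?thesis
    by (simp add: le_divide_eq)
qed

lemma S_seq_t0_of_le_bound:
  assumes "0 < \<alpha>" "\<alpha> < 1" "0 < \<gamma>" "\<gamma> < 1"
  shows "S_seq \<alpha> \<gamma> (t0_of \<alpha> \<gamma>) \<le> A_gamma \<alpha> \<gamma> * (1 - \<gamma>) / (1 - \<gamma> ^ t0_of \<alpha> \<gamma>)"
proof -
  have "\<gamma> ^ t0_of \<alpha> \<gamma> < 1"
    using t0_of_ge_1[OF assms] assms(3,4) by (simp add: power_less_one_iff)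
  moreover have "(1 - \<gamma> ^ t0_of \<alpha> \<gamma>) * S_seq \<alpha> \<gamma> (t0_of \<alpha> \<gamma>) / (1 - \<gamma>) \<le> A_gamma \<alpha> \<gamma>"
    unfolding A_gamma_def by simp
  then have "(1 - \<gamma> ^ t0_of \<alpha> \<gamma>) * S_seq \<alpha> \<gamma> (t0_of \<alpha> \<gamma>) \<le> A_gamma \<alpha> \<gamma> * (1 - \<gamma>)"
    using assms(4) by (simp add: divide_le_eq)
  ultimately show ?thesis
    by (simp add: le_divide_eq mult.commute)
qed

theorem proposition2:
  fixes \<alpha> \<gamma> :: real
  assumes "0 < \<alpha>" "\<alpha> < 1" "0 < \<gamma>" "\<gamma> < 1"
  shows "(\<forall>t::nat. t \<ge> t0_of \<alpha> \<gamma> \<longrightarrow>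
            S_seq \<alpha> \<gamma> t \<le> A_gamma \<alpha> \<gamma> * (1 - \<gamma>) / (1 - \<gamma> ^ t))
       \<and> (S_seq \<alpha> \<gamma> \<longlonglongrightarrow> (1 - \<gamma>) * \<alpha> / (1 - \<alpha>))"
proof (intro conjI allI impI)
  fix t
  assume "t0_of \<alpha> \<gamma> \<le> t"
  moreover have "2 * \<alpha> / (1 - \<alpha>) \<le> A_gamma \<alpha> \<gamma>"
    unfolding A_gamma_def by simp
  ultimately show "S_seq \<alpha> \<gamma> t \<le> A_gamma \<alpha> \<gamma> * (1 - \<gamma>) / (1 - \<gamma> ^ t)"
    using S_seq_le_bound_from[OF assms t0_of_ge_1[OF assms] power_mul_le_beyond_t0_of[OF assms]]
      S_seq_t0_of_le_bound[OF assms] by blast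
next
  show "S_seq \<alpha> \<gamma> \<longlonglongrightarrow> (1 - \<gamma>) * \<alpha> / (1 - \<alpha>)"
    using S_seq_tendsto[OF assms] .
qed

end
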